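(* Let $n>2$ and $q>0$ be integers such that $n$ is even or $q$ is odd. Then for every prime $p>\max\{n,(q-1)n+1\}$, $$ p^n\sum_{k=0}^{p-1}\frac{(1)_k^n}{(\frac{p}{n}-q+2)_k^n}\equiv0\pmod{p^3}. $$
   Context: $(x)_k$ denotes the Pochhammer symbol: $(x)_0=1$ and $(x)_k=x(x+1)\cdots(x+k-1)$ for $k>0$. A congruence between rational numbers modulo $p^m$ means their difference lies in $p^m\mathbb{Z}_{(p)}$, where $\mathbb{Z}_{(p)}$ is the ring of rationals whose denominators are coprime to $p$. *)

theory Defs
  imports Complex_Main "HOL-Computational_Algebra.Primes"
begin

definition in_Zp :: "nat \<Rightarrow> rat \<Rightarrow> bool" where
  "in_Zp p x \<longleftrightarrow> (\<exists>a b::int. \<not> (int p dvd b) \<and> x = of_int a / of_int b)"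

definition rat_cong :: "rat \<Rightarrow> rat \<Rightarrow> nat \<Rightarrow> nat \<Rightarrow> bool" where
  "rat_cong x y p m \<longleftrightarrow> (\<exists>z. in_Zp p z \<and> x - y = (of_nat p) ^ m * z)"

end

theory Submission
  imports Defs "HOL-Computational_Algebra.Polynomial"
begin

text \<open>Put \<open>y = p/n\<close>, which is divisible by \<open>p\<close> in \<open>\<int>\<^sub>(\<^sub>p\<^sub>)\<close>, and \<open>a = y - q + 2\<close>. The terms
  with \<open>k < q - 1\<close> are \<open>p\<^sup>n\<close> times \<open>p\<close>-adic units. Writing \<open>k = t + q - 2\<close>, the remaining terms
  are, up to a common unit factor, \<open>Q(t) w(t)\<close> with \<open>Q(x) = ((x)\<^sub>q\<^sub>-\<^sub>1)\<^sup>n\<close> and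
  \<open>w(t) = ((t-1)!/(y+1)\<^sub>t\<^sub>-\<^sub>1)\<^sup>n\<close>; adding the terms \<open>p - q + 1 < t < p\<close>, which are
  divisible by \<open>p\<^sup>n\<close>, extends the range to \<open>1 \<le> t < p\<close>.

  Since \<open>w(t+1) = w(t) (t/(t+y))\<^sup>n\<close>, this sum telescopes modulo \<open>p\<^sup>3\<close> once we have
  \<open>F = F\<^sub>0 + y F\<^sub>1 + y\<^sup>2 F\<^sub>2\<close>, with polynomials \<open>F\<^sub>i\<close> over \<open>\<int>\<^sub>(\<^sub>p\<^sub>)\<close>, such that
  \<open>F(t+1) t\<^sup>n \<equiv> (F(t) + Q(t)) (t+y)\<^sup>n\<close> modulo \<open>y\<^sup>3\<close>: \<open>F\<^sub>0\<close> is an antidifference of \<open>Q\<close>, and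
  \<open>F\<^sub>1\<close>, \<open>F\<^sub>2\<close> are antidifferences of the first- and second-order terms of the binomial
  expansion of \<open>(t+y)\<^sup>n\<close>. What remains is \<open>F(p) w(p) - F(1)\<close>, which vanishes modulo \<open>p\<^sup>3\<close>
  because \<open>w(p) \<equiv> 1\<close> modulo \<open>p\<^sup>2\<close> and \<open>F(p) \<equiv> F(1)\<close> modulo \<open>p\<^sup>3\<close>. The latter needs the
  coefficient of \<open>x\<^sup>2\<close> in \<open>F\<^sub>0\<close> to vanish, which follows from the symmetry
  \<open>Q(2 - q - x) = Q(x)\<close>, valid because \<open>n\<close> is even or \<open>q\<close> is odd.\<close>

section \<open>The local ring \<open>\<int>\<^sub>(\<^sub>p\<^sub>)\<close>\<close>

definition Zp_unit :: "nat \<Rightarrow> rat \<Rightarrow> bool" where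
  "Zp_unit p x \<longleftrightarrow> x \<noteq> 0 \<and> in_Zp p x \<and> in_Zp p (inverse x)"

definition Zp_dvd :: "nat \<Rightarrow> nat \<Rightarrow> rat \<Rightarrow> bool" where
  "Zp_dvd p k x \<longleftrightarrow> (\<exists>z. in_Zp p z \<and> x = of_nat p ^ k * z)"

lemma rat_cong_iff_Zp_dvd: "rat_cong x y p m \<longleftrightarrow> Zp_dvd p m (x - y)"
  unfolding rat_cong_def Zp_dvd_def ..

lemma in_Zp_uminus: "in_Zp p x \<Longrightarrow> in_Zp p (- x)"
  unfolding in_Zp_def by (metis minus_divide_left of_int_minus)

locale Zp =
  fixes p :: nat
  assumes prime_p: "prime p"
begin

lemma not_dvd_mult: "\<not> int p dvd a \<Longrightarrow> \<not> int p dvd b \<Longrightarrow> \<not> int p dvd (a * b)"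
  using prime_p by (simp add: prime_dvd_mult_iff)

lemma in_Zp_of_int [simp]: "in_Zp p (of_int a)"
  unfolding in_Zp_def using prime_p by (intro exI[of _ a] exI[of _ 1]) (auto simp: prime_gt_1_nat)

lemma in_Zp_of_nat [simp]: "in_Zp p (of_nat a)"
  using in_Zp_of_int[of "int a"] by simp

lemma in_Zp_fact [simp]: "in_Zp p (fact k)"
  using in_Zp_of_nat[of "fact k"] by (simp only: of_nat_fact)

lemma in_Zp_0 [simp]: "in_Zp p 0" and in_Zp_1 [simp]: "in_Zp p 1"
  using in_Zp_of_nat[of 0] in_Zp_of_nat[of 1] by simp_all

lemma in_Zp_add:
  assumes "in_Zp p x" "in_Zp p y" shows "in_Zp p (x + y)"
proof -
  obtain a b c d where "\<not> int p dvd b" "x = of_int a / of_int b" "\<not> int p dvd d" "y = of_int c / of_int d"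
    using assms unfolding in_Zp_def by blast
  moreover from this have "b \<noteq> 0" "d \<noteq> 0" by auto
  ultimately have "x + y = of_int (a * d + c * b) / of_int (b * d)" "\<not> int p dvd (b * d)"
    by (auto simp: field_simps not_dvd_mult)
  then show ?thesis unfolding in_Zp_def by blast
qed

lemma in_Zp_mult:
  assumes "in_Zp p x" "in_Zp p y" shows "in_Zp p (x * y)"
proof -
  obtain a b c d where "\<not> int p dvd b" "x = of_int a / of_int b" "\<not> int p dvd d" "y = of_int c / of_int d"
    using assms unfolding in_Zp_def by blast
  then have "x * y = of_int (a * c) / of_int (b * d)" "\<not> int p dvd (b * d)"
    by (auto simp: not_dvd_mult)
  then show ?thesis unfolding in_Zp_def by blast
qed

lemma in_Zp_diff: "in_Zp p x \<Longrightarrow> in_Zp p y \<Longrightarrow> in_Zp p (x - y)"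
  using in_Zp_add[of x "- y"] in_Zp_uminus[of p y] by simp

lemma in_Zp_sum: "(\<And>i. i \<in> A \<Longrightarrow> in_Zp p (f i)) \<Longrightarrow> in_Zp p (\<Sum>i\<in>A. f i)"
  by (induction A rule: infinite_finite_induct) (auto simp: in_Zp_add)

lemma in_Zp_prod: "(\<And>i. i \<in> A \<Longrightarrow> in_Zp p (f i)) \<Longrightarrow> in_Zp p (\<Prod>i\<in>A. f i)"
  by (induction A rule: infinite_finite_induct) (auto simp: in_Zp_mult)

lemma in_Zp_power: "in_Zp p x \<Longrightarrow> in_Zp p (x ^ k)"
  by (induction k) (auto simp: in_Zp_mult)

lemmas in_Zp_intros = in_Zp_add in_Zp_diff in_Zp_mult in_Zp_power in_Zp_sum in_Zp_prod
  in_Zp_of_nat in_Zp_0 in_Zp_1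

lemma in_Zp_inverse_of_nat: "0 < k \<Longrightarrow> k < p \<Longrightarrow> in_Zp p (inverse (of_nat k))"
  unfolding in_Zp_def
  by (intro exI[of _ 1] exI[of _ "int k"]) (auto simp: inverse_eq_divide dest: zdvd_imp_le)

lemma Zp_unit_of_int:
  assumes "\<not> int p dvd a" shows "Zp_unit p (of_int a)"
proof -
  have "inverse (of_int a) = (of_int 1 / of_int a :: rat)" by (simp add: inverse_eq_divide)
  then have "in_Zp p (inverse (of_int a))" unfolding in_Zp_def using assms by blast
  then show ?thesis unfolding Zp_unit_def using assms by auto
qed

lemma Zp_unit_mult: "Zp_unit p x \<Longrightarrow> Zp_unit p y \<Longrightarrow> Zp_unit p (x * y)"
  unfolding Zp_unit_def by (auto simp: in_Zp_mult)

lemma Zp_unit_prod: "(\<And>i. i \<in> A \<Longrightarrow> Zp_unit p (f i)) \<Longrightarrow> Zp_unit p (\<Prod>i\<in>A. f i)"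
  by (induction A rule: infinite_finite_induct) (auto simp: Zp_unit_mult Zp_unit_def[of p 1])

lemma Zp_unit_inverse: "Zp_unit p x \<Longrightarrow> Zp_unit p (inverse x)"
  unfolding Zp_unit_def by simp

lemma Zp_dvd_zero_exp_iff: "Zp_dvd p 0 x \<longleftrightarrow> in_Zp p x"
  unfolding Zp_dvd_def by simp

lemma Zp_dvd_0 [simp]: "Zp_dvd p k 0"
  unfolding Zp_dvd_def by force

lemma Zp_dvd_add: "Zp_dvd p k x \<Longrightarrow> Zp_dvd p k y \<Longrightarrow> Zp_dvd p k (x + y)"
  unfolding Zp_dvd_def by (metis in_Zp_add distrib_left)

lemma Zp_dvd_uminus: "Zp_dvd p k x \<Longrightarrow> Zp_dvd p k (- x)"
  unfolding Zp_dvd_def by (metis in_Zp_uminus mult_minus_right)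

lemma Zp_dvd_diff: "Zp_dvd p k x \<Longrightarrow> Zp_dvd p k y \<Longrightarrow> Zp_dvd p k (x - y)"
  using Zp_dvd_add[of k x "- y"] Zp_dvd_uminus[of k y] by simp

lemma Zp_dvd_sum: "(\<And>i. i \<in> A \<Longrightarrow> Zp_dvd p k (f i)) \<Longrightarrow> Zp_dvd p k (\<Sum>i\<in>A. f i)"
  by (induction A rule: infinite_finite_induct) (auto simp: Zp_dvd_add)

lemma Zp_dvd_mult:
  assumes "Zp_dvd p j x" "Zp_dvd p k y" shows "Zp_dvd p (j + k) (x * y)"
proof -
  obtain z w where "in_Zp p z" "x = of_nat p ^ j * z" "in_Zp p w" "y = of_nat p ^ k * w"
    using assms unfolding Zp_dvd_def by blast
  then show ?thesis unfolding Zp_dvd_def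
    by (intro exI[of _ "z * w"]) (auto simp: in_Zp_mult power_add)
qed

lemma Zp_dvd_mult_right: "Zp_dvd p k x \<Longrightarrow> in_Zp p y \<Longrightarrow> Zp_dvd p k (x * y)"
  using Zp_dvd_mult[of k x 0 y] by (simp add: Zp_dvd_zero_exp_iff)

lemma Zp_dvd_mult_left: "Zp_dvd p k x \<Longrightarrow> in_Zp p y \<Longrightarrow> Zp_dvd p k (y * x)"
  using Zp_dvd_mult_right[of k x y] by (simp add: mult.commute)

lemma Zp_dvd_mono:
  assumes "j \<le> k" "Zp_dvd p k x" shows "Zp_dvd p j x"
proof -
  obtain z where z: "in_Zp p z" "x = of_nat p ^ k * z" using assms(2) unfolding Zp_dvd_def by blast
  then have "x = of_nat p ^ j * (of_nat p ^ (k - j) * z)"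
    using assms(1) by (simp add: power_add[symmetric] mult.assoc[symmetric])
  moreover have "in_Zp p (of_nat p ^ (k - j) * z)" using z(1) by (simp add: in_Zp_mult in_Zp_power)
  ultimately show ?thesis unfolding Zp_dvd_def by blast
qed

lemma in_Zp_if_Zp_dvd: "Zp_dvd p k x \<Longrightarrow> in_Zp p x"
  using Zp_dvd_mono[of 0 k x] by (simp add: Zp_dvd_zero_exp_iff)

lemma Zp_dvd_power: "Zp_dvd p k x \<Longrightarrow> Zp_dvd p (k * m) (x ^ m)"
  by (induction m) (auto simp: Zp_dvd_zero_exp_iff Zp_dvd_mult add.commute)

lemma Zp_dvd_of_nat_p: "Zp_dvd p 1 (of_nat p)"
  unfolding Zp_dvd_def by force

lemma Zp_dvd_p_div_of_nat: "0 < n \<Longrightarrow> n < p \<Longrightarrow> Zp_dvd p 1 (of_nat p / of_nat n)"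
  unfolding Zp_dvd_def by (intro exI[of _ "inverse (of_nat n)"]) (simp add: divide_inverse in_Zp_inverse_of_nat)

lemma Zp_unit_add_Zp_dvd:
  assumes "Zp_unit p u" "Zp_dvd p 1 w" shows "Zp_unit p (u + w)"
proof -
  obtain z where z: "in_Zp p z" "w = of_nat p * z" using assms(2) unfolding Zp_dvd_def by auto
  have "in_Zp p (z * inverse u)" using z(1) assms(1) unfolding Zp_unit_def by (simp add: in_Zp_mult)
  then obtain a b where ab: "\<not> int p dvd b" "z * inverse u = of_int a / of_int b"
    unfolding in_Zp_def by blast
  have "\<not> int p dvd (b + int p * a)" using ab(1) by (metis dvd_add_left_iff dvd_triv_left)
  then have "Zp_unit p (of_int (b + int p * a) * inverse (of_int b))"
    using ab(1) by (intro Zp_unit_mult Zp_unit_inverse Zp_unit_of_int)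
  also have "of_int (b + int p * a) * inverse (of_int b) = 1 + of_nat p * (z * inverse u)"
  proof -
    have "(of_int b :: rat) \<noteq> 0" using ab(1) by auto
    then show ?thesis unfolding ab(2) by (simp add: field_simps)
  qed
  finally have "Zp_unit p (u * (1 + of_nat p * (z * inverse u)))"
    using assms(1) Zp_unit_mult by blast
  moreover have "u * (1 + of_nat p * (z * inverse u)) = u + w"
    using z assms(1) unfolding Zp_unit_def by (simp add: field_simps)
  ultimately show ?thesis by simp
qed

lemma Zp_dvd_prod_diff:
  assumes "\<And>i. i \<in> A \<Longrightarrow> in_Zp p (f i)" "\<And>i. i \<in> A \<Longrightarrow> in_Zp p (g i)"
    "\<And>i. i \<in> A \<Longrightarrow> Zp_dvd p k (f i - g i)"
  shows "Zp_dvd p k (prod f A - prod g A)"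
  using assms
proof (induction A rule: infinite_finite_induct)
  case (insert a A)
  have "prod f (insert a A) - prod g (insert a A) = f a * (prod f A - prod g A) + (f a - g a) * prod g A"
    using insert.hyps by (simp add: algebra_simps)
  then show ?case
    using insert by (simp add: Zp_dvd_add Zp_dvd_mult_left Zp_dvd_mult_right in_Zp_prod)
qed simp_all

lemma Zp_dvd_power_diff_1:
  assumes "in_Zp p a" "Zp_dvd p k (a - 1)" shows "Zp_dvd p k (a ^ m - 1)"
proof (induction m)
  case (Suc m)
  have "a ^ Suc m - 1 = a * (a ^ m - 1) + (a - 1)" by (simp add: algebra_simps)
  moreover have "Zp_dvd p k (a * (a ^ m - 1) + (a - 1))"
    using Suc assms by (simp add: Zp_dvd_add Zp_dvd_mult_left)
  ultimately show ?case by (simp only:)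
qed simp

end

section \<open>Polynomials with \<open>p\<close>-integral coefficients\<close>

definition Zp_poly :: "nat \<Rightarrow> rat poly \<Rightarrow> bool" where
  "Zp_poly p f \<longleftrightarrow> (\<forall>i. in_Zp p (coeff f i))"

lemma pcompose_power: "pcompose (f ^ k) g = pcompose f g ^ k"
  by (induction k) (simp_all add: pcompose_mult pcompose_1)

lemma poly_shift_eq: "poly (pcompose (f :: 'a::comm_semiring_1 poly) [:1, 1:]) x = poly f (x + 1)"
  by (simp add: poly_pcompose add.commute)

context Zp
begin

lemma Zp_poly_0 [simp]: "Zp_poly p 0"
  unfolding Zp_poly_def by simp

lemma Zp_poly_pCons_iff [simp]: "Zp_poly p (pCons a f) \<longleftrightarrow> in_Zp p a \<and> Zp_poly p f"
  unfolding Zp_poly_def by (metis coeff_pCons_0 coeff_pCons_Suc not0_implies_Suc)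

lemma Zp_poly_add: "Zp_poly p f \<Longrightarrow> Zp_poly p g \<Longrightarrow> Zp_poly p (f + g)"
  unfolding Zp_poly_def by (simp add: in_Zp_add)

lemma Zp_poly_diff: "Zp_poly p f \<Longrightarrow> Zp_poly p g \<Longrightarrow> Zp_poly p (f - g)"
  unfolding Zp_poly_def by (simp add: in_Zp_diff)

lemma Zp_poly_smult: "in_Zp p c \<Longrightarrow> Zp_poly p f \<Longrightarrow> Zp_poly p (smult c f)"
  unfolding Zp_poly_def by (simp add: in_Zp_mult)

lemma Zp_poly_mult: "Zp_poly p f \<Longrightarrow> Zp_poly p g \<Longrightarrow> Zp_poly p (f * g)"
  unfolding Zp_poly_def coeff_mult by (simp add: in_Zp_sum in_Zp_mult)

lemma Zp_poly_1 [simp]: "Zp_poly p 1"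
  by (simp add: one_pCons)

lemma Zp_poly_power: "Zp_poly p f \<Longrightarrow> Zp_poly p (f ^ k)"
  by (induction k) (simp_all add: Zp_poly_mult)

lemma Zp_poly_prod: "(\<And>i. i \<in> A \<Longrightarrow> Zp_poly p (f i)) \<Longrightarrow> Zp_poly p (\<Prod>i\<in>A. f i)"
  by (induction A rule: infinite_finite_induct) (simp_all add: Zp_poly_mult)

lemma in_Zp_poly: "Zp_poly p f \<Longrightarrow> in_Zp p x \<Longrightarrow> in_Zp p (poly f x)"
  by (induction f) (simp_all add: in_Zp_add in_Zp_mult)

lemma Zp_poly_cubic_remainder:
  assumes "Zp_poly p f" "in_Zp p x"
  obtains z where "in_Zp p z"
    "poly f x = coeff f 0 + coeff f 1 * x + coeff f 2 * x ^ 2 + x ^ 3 * z"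
proof -
  obtain a b c h where h: "f = pCons a (pCons b (pCons c h))" by (metis pCons_cases)
  then have "poly f x = coeff f 0 + coeff f 1 * x + coeff f 2 * x ^ 2 + x ^ 3 * poly h x"
    by (simp add: numeral_2_eq_2 numeral_3_eq_3 algebra_simps)
  moreover have "in_Zp p (poly h x)" using assms h by (simp add: in_Zp_poly)
  ultimately show thesis using that by blast
qed

lemma Zp_poly_divide_X:
  assumes "Zp_poly p W" "coeff W 0 = 0" "degree W \<le> d + 1"
  obtains K where "Zp_poly p K" "degree K \<le> d" "W = pCons 0 K"
proof -
  obtain a K where W: "W = pCons a K" by (rule pCons_cases)
  then have "a = 0" using assms(2) by simp
  moreover have "degree K \<le> d" using assms(3) W by (cases "K = 0") auto
  ultimately show thesis using that assms(1) W by simp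
qed

text \<open>The witness is \<open>h = c/(d+1) x\<^sup>d\<^sup>+\<^sup>1\<close>; the bound on \<open>d\<close> makes \<open>1/(d+1)\<close> \<open>p\<close>-integral.\<close>

lemma Zp_poly_leading_antidifference:
  assumes "in_Zp p c" "d + 2 \<le> p"
  obtains h D where "Zp_poly p h" "degree h \<le> d + 1" "coeff h 0 = 0" "pcompose h [:1, 1:] = h + D"
    "Zp_poly p D" "degree D \<le> d" "coeff D d = c"
proof -
  define a where "a = c / of_nat (d + 1)"
  define h where "h = smult a ([:0, 1:] ^ (d + 1))"
  define D where "D = smult a ([:1, 1:] ^ (d + 1) - [:0, 1:] ^ (d + 1))"
  have "pcompose h [:1, 1:] = h + D"
    unfolding h_def D_def pcompose_smult by (simp add: pcompose_power pcompose_pCons smult_diff_right)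
  moreover have "in_Zp p a"
    using assms unfolding a_def by (simp add: divide_inverse in_Zp_mult in_Zp_inverse_of_nat del: of_nat_Suc)
  then have "Zp_poly p D" "Zp_poly p h"
    unfolding D_def h_def by (intro Zp_poly_smult Zp_poly_diff Zp_poly_power; simp)+
  moreover have "coeff D d = c" and coeff_D_Suc: "coeff D (d + 1) = 0"
    unfolding D_def a_def coeff_smult coeff_diff
    by (simp_all add: coeff_linear_poly_power del: of_nat_Suc power_Suc)
  moreover have "degree D \<le> d"
  proof (rule degree_le, intro allI impI)
    fix i assume "d < i"
    have "degree D \<le> d + 1" unfolding D_def
      by (intro order.trans[OF degree_smult_le] degree_diff_le) (simp_all only: degree_linear_power)
    then show "coeff D i = 0"
      using coeff_D_Suc \<open>d < i\<close> by (cases "i = d + 1") (auto intro: coeff_eq_0)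
  qed
  moreover have "degree h \<le> d + 1" unfolding h_def by (metis degree_linear_power degree_smult_le)
  moreover have "coeff h 0 = 0" unfolding h_def by (simp add: coeff_linear_poly_power)
  ultimately show thesis using that by blast
qed

lemma Zp_poly_antidifference:
  assumes "Zp_poly p f" "degree f + 2 \<le> p"
  shows "\<exists>g. Zp_poly p g \<and> degree g \<le> degree f + 1 \<and> coeff g 0 = 0 \<and> pcompose g [:1, 1:] = g + f"
  using assms
proof (induction "degree f" arbitrary: f rule: less_induct)
  case less
  define d where "d = degree f"
  obtain h D where h: "Zp_poly p h" "degree h \<le> d + 1" "coeff h 0 = 0" "pcompose h [:1, 1:] = h + D"
    and D: "Zp_poly p D" "degree D \<le> d" "coeff D d = coeff f d"
    using Zp_poly_leading_antidifference[of "coeff f d" d] less.prems unfolding d_def Zp_poly_def by blast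
  define f' where "f' = f - D"
  have "degree f' \<le> d" "coeff f' d = 0"
    unfolding f'_def using D d_def by (auto intro: degree_diff_le)
  then have f'_smaller: "f' = 0 \<or> degree f' < degree f"
    unfolding d_def by (metis leading_coeff_0_iff le_neq_implies_less)
  have "Zp_poly p f'" unfolding f'_def using less.prems(1) D(1) by (rule Zp_poly_diff)
  obtain g' where g': "Zp_poly p g'" "degree g' \<le> degree f' + 1" "coeff g' 0 = 0"
      "pcompose g' [:1, 1:] = g' + f'"
  proof (cases "f' = 0")
    case True
    then show thesis using that[of 0] by simp
  next
    case False
    then show thesis using that less.hyps[of f'] less.prems(2) \<open>Zp_poly p f'\<close> f'_smaller by auto
  qed
  show ?case
  proof (intro exI[of _ "g' + h"] conjI)
    show "Zp_poly p (g' + h)" using g'(1) h(1) by (rule Zp_poly_add)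
    show "degree (g' + h) \<le> degree f + 1"
      using g'(2) h(2) \<open>degree f' \<le> d\<close> d_def by (intro degree_add_le) auto
    show "coeff (g' + h) 0 = 0" using g'(3) h(3) by simp
    show "pcompose (g' + h) [:1, 1:] = g' + h + f"
      using g'(4) h(4) unfolding f'_def by (simp add: pcompose_add algebra_simps)
  qed
qed

end

section \<open>Antidifferences of powers of rising factorials\<close>

definition pochhammer_poly :: "nat \<Rightarrow> 'a::comm_semiring_1 poly" where
  "pochhammer_poly m = (\<Prod>j<m. [:of_nat j, 1:])"

lemma poly_pochhammer_poly: "poly (pochhammer_poly m) x = pochhammer x m"
  by (simp add: pochhammer_poly_def poly_prod pochhammer_prod atLeast0LessThan add.commute)

lemma degree_pochhammer_poly_power_le:
  "degree (pochhammer_poly m ^ n :: 'a::comm_semiring_1 poly) \<le> n * m"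
proof -
  have "degree (pochhammer_poly m :: 'a poly) \<le> m"
    unfolding pochhammer_poly_def using degree_prod_sum_le[of "{..<m}" "\<lambda>j. [:of_nat j, 1 :: 'a:]"]
    by simp
  then show ?thesis by (metis degree_power_le le_trans mult.commute mult_le_mono1)
qed

lemma coeff_pochhammer_poly_power_eq_0:
  assumes "1 \<le> m" "i < n"
  shows "coeff (pochhammer_poly m ^ n :: 'a::comm_semiring_1 poly) i = 0"
proof -
  define R where "R = (\<Prod>j<m - 1. [:of_nat (Suc j), 1 :: 'a:])"
  have "pochhammer_poly m = [:0, 1:] * R"
    unfolding pochhammer_poly_def R_def using assms(1) prod.lessThan_Suc_shift[of "\<lambda>j. [:of_nat j, 1 :: 'a:]" "m - 1"]
    by simp
  then have "pochhammer_poly m ^ n = monom 1 n * R ^ n"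
    by (simp only: power_mult_distrib monom_altdef smult_1_left)
  then show ?thesis using assms(2) by (simp add: coeff_monom_mult)
qed

lemma periodic_poly_eq_const:
  fixes G :: "'a::{idom, ring_char_0} poly"
  assumes "\<And>x. poly G (x + 1) = poly G x"
  shows "G = [:poly G 0:]"
proof -
  define H where "H = G - [:poly G 0:]"
  have "poly G (of_nat k) = poly G 0" for k
    by (induction k) (auto simp: assms[of "of_nat _", symmetric] add.commute)
  then have "range of_nat \<subseteq> {x. poly H x = 0}" unfolding H_def by auto
  moreover have "infinite (range (of_nat :: nat \<Rightarrow> 'a))"
    by (simp add: range_inj_infinite inj_of_nat)
  ultimately have "H = 0" using poly_roots_finite finite_subset by blast
  then show ?thesis unfolding H_def by simp
qed

lemma poly_pochhammer_poly_power_reflect: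
  fixes x :: "'a::field_char_0"
  assumes "even n \<or> even m"
  shows "poly (pochhammer_poly m ^ n) (1 - of_nat m - x) = poly (pochhammer_poly m ^ n) x"
proof -
  have "pochhammer (1 - of_nat m - x) m = pochhammer (- (x + of_nat m - 1)) m"
    by (simp add: algebra_simps)
  also have "\<dots> = (-1) ^ m * pochhammer (x + of_nat m - 1 - of_nat m + 1) m"
    by (rule pochhammer_minus)
  finally have "poly (pochhammer_poly m ^ n) (1 - of_nat m - x) = ((-1) ^ m) ^ n * poly (pochhammer_poly m ^ n) x"
    by (simp add: poly_pochhammer_poly power_mult_distrib)
  moreover have "((-1 :: 'a) ^ m) ^ n = 1"
    using assms by (auto simp: power_mult[symmetric] mult.commute)
  ultimately show ?thesis by simp
qed

lemma poly_pderiv2_power_eq_0: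
  fixes P :: "'a::idom poly"
  assumes "poly P r = 0" "3 \<le> n"
  shows "poly (pderiv (pderiv (P ^ n))) r = 0"
proof -
  obtain m where "n = Suc (Suc (Suc m))" using le_Suc_ex[OF assms(2)] by auto
  then show ?thesis using assms(1) by (simp add: pderiv_power_Suc pderiv_mult pderiv_smult del: power_Suc)
qed

lemma antidifference_reflect_pderiv2:
  fixes F Q :: "'a::field_char_0 poly"
  assumes F: "pcompose F [:1, 1:] = F + Q" and Q: "\<And>x. poly Q (c - x) = poly Q x"
  shows "poly (pderiv (pderiv F)) (c + 1 - x) = - poly (pderiv (pderiv F)) x"
proof -
  define G where "G = pcompose F [:c + 1, -1:] + F"
  have F_step: "poly F (x + 1) = poly F x + poly Q x" for x
    using arg_cong[OF F, of "\<lambda>f. poly f x"] by (simp add: poly_shift_eq)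
  have G_eval: "poly G x = poly F (c + 1 - x) + poly F x" for x
    unfolding G_def by (simp add: poly_pcompose algebra_simps)
  have "poly G (x + 1) = poly G x" for x
  proof -
    have "c + 1 - (x + 1) = c - x" by simp
    have "poly F (c + 1 - x) = poly F (c - x + 1)" by (simp add: algebra_simps)
    also have "\<dots> = poly F (c - x) + poly Q x" using F_step[of "c - x"] Q[of x] by simp
    finally have "poly F (c + 1 - x) = poly F (c - x) + poly Q x" .
    then show ?thesis unfolding G_eval \<open>c + 1 - (x + 1) = c - x\<close> F_step by simp
  qed
  then have "G = [:poly G 0:]" by (rule periodic_poly_eq_const)
  then have "pderiv (pderiv G) = pderiv (pderiv [:poly G 0:])" by (rule arg_cong)
  then have "pderiv (pderiv G) = 0" by (simp add: pderiv_pCons)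
  moreover have "pderiv (pderiv G) = pcompose (pderiv (pderiv F)) [:c + 1, -1:] + pderiv (pderiv F)"
    unfolding G_def by (simp add: pderiv_add pderiv_diff pderiv_minus pderiv_pcompose pderiv_pCons)
  ultimately have "poly (pcompose (pderiv (pderiv F)) [:c + 1, -1:] + pderiv (pderiv F)) x = 0"
    by simp
  then show ?thesis by (simp add: poly_pcompose algebra_simps eq_neg_iff_add_eq_0)
qed

text \<open>Here the parity hypothesis enters: \<open>F''\<close> is odd about \<open>1 - m/2\<close>, and it is constant on
  the integers from \<open>2 - m\<close> to \<open>1\<close>, between which \<open>Q''\<close> vanishes.\<close>

lemma antidifference_pochhammer_power_coeff_2:
  fixes F :: "'a::field_char_0 poly"
  assumes F: "pcompose F [:1, 1:] = F + pochhammer_poly m ^ n"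
    and "3 \<le> n" "1 \<le> m" "even n \<or> even m"
  shows "coeff F 2 = 0"
proof -
  define Q :: "'a poly" where "Q = pochhammer_poly m ^ n"
  define D2 where "D2 = pderiv (pderiv F)"
  have "poly Q (1 - of_nat m - x) = poly Q x" for x
    unfolding Q_def using assms(4) by (rule poly_pochhammer_poly_power_reflect)
  then have reflect: "poly D2 (1 - of_nat m + 1 - x) = - poly D2 x" for x
    using antidifference_reflect_pderiv2 F unfolding D2_def Q_def by blast
  have "pcompose D2 [:1, 1:] = D2 + pderiv (pderiv Q)"
    using arg_cong[OF F, of "\<lambda>f. pderiv (pderiv f)"] unfolding D2_def Q_def
    by (simp add: pderiv_pcompose pderiv_pCons pderiv_add)
  then have D2_step: "poly D2 (x + 1) = poly D2 x + poly (pderiv (pderiv Q)) x" for x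
    by (metis poly_add poly_shift_eq)
  have "poly (pderiv (pderiv Q)) (- of_nat j) = 0" if "j < m" for j
    unfolding Q_def using that assms(2)
    by (intro poly_pderiv2_power_eq_0) (auto simp: poly_pochhammer_poly pochhammer_eq_0_iff)
  then have D2_const: "poly D2 (1 - of_nat j) = poly D2 1" if "j \<le> m" for j
    using that by (induction j) (auto simp: D2_step[of "- of_nat _", simplified] algebra_simps)
  have "poly D2 0 = poly D2 1" using D2_const[of 1] assms(3) by simp
  moreover have "poly D2 (1 - of_nat m + 1) = poly D2 1"
    using D2_const[of "m - 1"] assms(3) by (simp add: of_nat_diff)
  ultimately have "poly D2 0 = 0" using reflect[of 0] by simp
  then show ?thesis unfolding D2_def by (simp add: poly_0_coeff_0 coeff_pderiv numeral_2_eq_2)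
qed

section \<open>The weights\<close>

definition poch_weight :: "nat \<Rightarrow> rat \<Rightarrow> nat \<Rightarrow> rat" where
  "poch_weight n y t = (fact (t - 1) / pochhammer (y + 1) (t - 1)) ^ n"

lemma poch_weight_Suc:
  assumes "1 \<le> t"
  shows "poch_weight n y (Suc t) = poch_weight n y t * (of_nat t / (of_nat t + y)) ^ n"
proof -
  obtain u where u: "t = Suc u" using assms by (cases t) auto
  have "fact t / pochhammer (y + 1) t = fact u / pochhammer (y + 1) u * (of_nat t / (of_nat t + y))"
    unfolding u by (simp add: pochhammer_Suc algebra_simps)
  then have "poch_weight n y (Suc t) = (fact u / pochhammer (y + 1) u * (of_nat t / (of_nat t + y))) ^ n"
    unfolding poch_weight_def by simp
  then show ?thesis unfolding power_mult_distrib by (simp add: poch_weight_def u)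
qed

lemma prod_mult_prod_reflect:
  "(\<Prod>j<m. f j) * (\<Prod>j<m. f j) = (\<Prod>j<m. f j * f (m - Suc j))"
  using prod.atLeastLessThan_rev[of f 0 m] by (simp add: atLeast0LessThan prod.distrib)

context Zp
begin

lemma Zp_unit_pochhammer:
  assumes "Zp_dvd p 1 y" "\<And>j. j < k \<Longrightarrow> \<not> int p dvd (c + int j)"
  shows "Zp_unit p (pochhammer (y + of_int c) k)"
proof -
  have "pochhammer (y + of_int c) k = (\<Prod>j\<in>{0..<k}. of_int (c + int j) + y)"
    unfolding pochhammer_prod by (simp add: algebra_simps)
  also have "Zp_unit p \<dots>"
    using assms by (intro Zp_unit_prod Zp_unit_add_Zp_dvd Zp_unit_of_int) auto
  finally show ?thesis .
qed

lemma Zp_unit_pochhammer_plus_1: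
  assumes "Zp_dvd p 1 y" "k < p"
  shows "Zp_unit p (pochhammer (y + 1) k)"
  using Zp_unit_pochhammer[OF assms(1), of k 1] assms(2) by (simp add: zdvd_not_zless)

lemma in_Zp_poch_weight:
  assumes "Zp_dvd p 1 y" "t \<le> p"
  shows "in_Zp p (poch_weight n y t)"
proof -
  have "Zp_unit p (pochhammer (y + 1) (t - 1))"
    using Zp_unit_pochhammer_plus_1 assms prime_gt_0_nat[OF prime_p] by simp
  then show ?thesis
    unfolding poch_weight_def Zp_unit_def by (simp add: divide_inverse in_Zp_mult in_Zp_power)
qed

text \<open>Pairing \<open>j\<close> with \<open>p - j\<close>: \<open>(y + j) (y + p - j) = j (p - j) + y p + y\<^sup>2\<close>.\<close>

lemma Zp_dvd_pochhammer_square_diff: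
  assumes "Zp_dvd p 1 y"
  shows "Zp_dvd p 2 (pochhammer (y + 1) (p - 1) ^ 2 - fact (p - 1) ^ 2)"
proof -
  define P where "P = (of_nat p :: rat)"
  have paired: "pochhammer (x + 1) (p - 1) ^ 2 = (\<Prod>j<p - 1. (1 + of_nat j) * (P - (1 + of_nat j)) + (x * P + x ^ 2))"
    for x :: rat
  proof -
    have pair: "(x + 1 + of_nat j) * (x + 1 + of_nat (p - 1 - Suc j)) = (1 + of_nat j) * (P - (1 + of_nat j)) + (x * P + x ^ 2)"
      if "j < p - 1" for j
    proof -
      have "of_nat (p - 1 - Suc j) = P - 2 - (of_nat j :: rat)" using that unfolding P_def by (simp add: of_nat_diff)
      then show ?thesis unfolding \<open>of_nat (p - 1 - Suc j) = P - 2 - of_nat j\<close>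
        by (simp add: algebra_simps power2_eq_square)
    qed
    show ?thesis
      unfolding power2_eq_square[of "pochhammer _ _"]
      unfolding pochhammer_prod atLeast0LessThan prod_mult_prod_reflect
      by (intro prod.cong refl) (rule pair, simp)
  qed
  have fact_paired: "fact (p - 1) ^ 2 = (\<Prod>j<p - 1. (1 + of_nat j) * (P - (1 + of_nat j)) :: rat)"
    using paired[of 0] by (simp add: pochhammer_fact)
  have "Zp_dvd p 2 (y * P + y ^ 2)"
    using Zp_dvd_mult[OF assms Zp_dvd_of_nat_p] Zp_dvd_power[OF assms, of 2] unfolding P_def
    by (simp add: Zp_dvd_add numeral_2_eq_2)
  then show ?thesis
    unfolding paired[of y] fact_paired using in_Zp_if_Zp_dvd[OF assms] unfolding P_def
    by (intro Zp_dvd_prod_diff) (simp_all add: in_Zp_intros)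
qed

lemma Zp_dvd_2_diff_if_square_diff:
  assumes "2 < p" "Zp_unit p x" "Zp_unit p z" "Zp_dvd p 1 (x - z)" "Zp_dvd p 2 (x ^ 2 - z ^ 2)"
  shows "Zp_dvd p 2 (x - z)"
proof -
  have "\<not> int p dvd 2" using assms(1) by (auto dest: zdvd_imp_le)
  then have "Zp_unit p (2 * z + (x - z))"
    using assms(3,4) by (intro Zp_unit_add_Zp_dvd Zp_unit_mult Zp_unit_of_int[of 2, simplified])
  then have "Zp_unit p (x + z)" by (simp add: add.commute)
  moreover have "x - z = (x ^ 2 - z ^ 2) * inverse (x + z)"
    using calculation unfolding Zp_unit_def by (simp add: field_simps power2_eq_square)
  ultimately show ?thesis using assms(5) unfolding Zp_unit_def by (simp add: Zp_dvd_mult_right)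
qed

lemma poch_weight_p_cong:
  assumes "Zp_dvd p 1 y" "2 < p"
  shows "Zp_dvd p 2 (poch_weight n y p - 1)"
proof -
  define X where "X = pochhammer (y + 1) (p - 1)"
  define Y where "Y = (fact (p - 1) :: rat)"
  have "p - 1 < p" using assms(2) by simp
  then have units: "Zp_unit p X" "Zp_unit p Y"
    unfolding X_def Y_def pochhammer_fact
    using Zp_unit_pochhammer_plus_1[OF assms(1)] Zp_unit_pochhammer_plus_1[OF Zp_dvd_0] by auto
  have "Zp_dvd p 1 (X - Y)"
    unfolding X_def Y_def pochhammer_fact pochhammer_prod
    using assms(1) in_Zp_if_Zp_dvd[OF assms(1)] by (intro Zp_dvd_prod_diff) (simp_all add: in_Zp_add)
  then have "Zp_dvd p 2 (X - Y)"
    using Zp_dvd_2_diff_if_square_diff[OF assms(2) units] Zp_dvd_pochhammer_square_diff[OF assms(1)]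
    unfolding X_def Y_def by blast
  moreover have "Y / X - 1 = - ((X - Y) * inverse X)" and "in_Zp p (inverse X)"
    using units(1) unfolding Zp_unit_def by (simp_all add: field_simps)
  ultimately have "Zp_dvd p 2 (Y / X - 1)" by (simp add: Zp_dvd_uminus Zp_dvd_mult_right)
  moreover have "in_Zp p (Y / X)"
    using units unfolding Zp_unit_def by (simp add: divide_inverse in_Zp_mult)
  ultimately show ?thesis
    unfolding poch_weight_def X_def[symmetric] Y_def[symmetric] by (blast intro: Zp_dvd_power_diff_1)
qed

end

section \<open>Telescoping\<close>

lemma binomial_ring_order_3:
  fixes s y :: "'a::comm_ring_1"
  assumes "3 \<le> n"
  shows "(s + y) ^ n = s ^ n + of_nat n * s ^ (n - 1) * y + of_nat (n choose 2) * s ^ (n - 2) * y ^ 2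
     + y ^ 3 * (\<Sum>k=3..n. of_nat (n choose k) * y ^ (k - 3) * s ^ (n - k))"
proof -
  have "(s + y) ^ n = (\<Sum>k\<le>n. of_nat (n choose k) * y ^ k * s ^ (n - k))"
    using binomial_ring[of y s n] by (simp add: add.commute)
  also have "{..n} = {..<3} \<union> {3..n}" using assms by auto
  also have "(\<Sum>k\<in>{..<3} \<union> {3..n}. of_nat (n choose k) * y ^ k * s ^ (n - k))
      = (\<Sum>k<3. of_nat (n choose k) * y ^ k * s ^ (n - k))
        + (\<Sum>k=3..n. of_nat (n choose k) * y ^ k * s ^ (n - k))"
    by (rule sum.union_disjoint) auto
  also have "(\<Sum>k=3..n. of_nat (n choose k) * y ^ k * s ^ (n - k))
      = y ^ 3 * (\<Sum>k=3..n. of_nat (n choose k) * y ^ (k - 3) * s ^ (n - k))"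
    unfolding sum_distrib_left by (intro sum.cong refl) (simp add: algebra_simps flip: power_add)
  finally show ?thesis by (simp add: numeral_3_eq_3 numeral_2_eq_2 algebra_simps)
qed

text \<open>With \<open>k = K(s)\<close>, \<open>f\<^sub>i = F\<^sub>i(s)\<close>, \<open>l = L(s)\<close>, this is \<open>F(s+1) s\<^sup>n - (F(s) + Q(s)) (s+y)\<^sup>n\<close>
  for \<open>F = F\<^sub>0 + y F\<^sub>1 + y\<^sup>2 F\<^sub>2\<close>: the orders \<open>y\<^sup>0\<close> and \<open>y\<^sup>1\<close> cancel identically.\<close>

lemma telescoping_identity:
  fixes s y f1 f2 k l u N C :: "'a::comm_ring_1"
  shows "(s * k + y * (f1 + N * k) + y ^ 2 * (f2 + l)) * s ^ (m + 3)
      - (s * k + y * f1 + y ^ 2 * f2) * (s ^ (m + 3) + N * s ^ (m + 2) * y + C * s ^ (m + 1) * y ^ 2 + y ^ 3 * u)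
    = y ^ 2 * s ^ (m + 2) * (s * l - N * f1 - C * k)
      - y ^ 3 * (C * s ^ (m + 1) * f1 + N * s ^ (m + 2) * f2 + y * C * s ^ (m + 1) * f2
        + (s * k + y * f1 + y ^ 2 * f2) * u)"
  by (simp add: algebra_simps power2_eq_square power3_eq_cube eval_nat_numeral)

locale telescoping_polys = Zp +
  fixes n :: nat and Q F0 F1 F2 K L :: "rat poly"
  assumes n_bounds: "3 \<le> n" "n < p"
    and Zp_polys: "Zp_poly p F0" "Zp_poly p F1" "Zp_poly p F2" "Zp_poly p K" "Zp_poly p L"
    and F0_shift: "pcompose F0 [:1, 1:] = F0 + Q"
    and F0_shift_factor: "F0 + Q = pCons 0 K"
    and F1_shift: "pcompose F1 [:1, 1:] = F1 + smult (of_nat n) K"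
    and L_factor: "pCons 0 L = smult (of_nat n) F1 + smult (of_nat (n choose 2)) K"
    and F2_shift: "pcompose F2 [:1, 1:] = F2 + L"
    and F0_coeffs: "coeff F0 0 = 0" "coeff F0 2 = 0"
    and Q_coeffs: "coeff Q 1 = 0" "coeff Q 2 = 0"
begin

abbreviation y :: rat where "y \<equiv> of_nat p / of_nat n"

definition F :: "rat \<Rightarrow> rat" where
  "F x = poly F0 x + y * poly F1 x + y ^ 2 * poly F2 x"

lemma y_Zp_dvd: "Zp_dvd p 1 y"
  using Zp_dvd_p_div_of_nat n_bounds by simp

lemma shift_evals:
  "poly F0 (x + 1) = poly F0 x + poly Q x"
  "poly F0 (x + 1) = x * poly K x"
  "poly F1 (x + 1) = poly F1 x + of_nat n * poly K x"
  "poly F2 (x + 1) = poly F2 x + poly L x"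
  "x * poly L x = of_nat n * poly F1 x + of_nat (n choose 2) * poly K x"
  using arg_cong[OF F0_shift, of "\<lambda>f. poly f x"] arg_cong[OF F0_shift_factor, of "\<lambda>f. poly f x"]
    arg_cong[OF F1_shift, of "\<lambda>f. poly f x"] arg_cong[OF F2_shift, of "\<lambda>f. poly f x"]
    arg_cong[OF L_factor, of "\<lambda>f. poly f x"]
  by (simp_all add: poly_shift_eq)

lemma F_endpoint_cong: "Zp_dvd p 3 (F (of_nat p) - F 1)"
proof -
  define P where "P = (of_nat p :: rat)"
  have "coeff K 0 = coeff F0 1" "coeff K 1 = 0"
    using arg_cong[OF F0_shift_factor, of "\<lambda>f. coeff f 1"] arg_cong[OF F0_shift_factor, of "\<lambda>f. coeff f 2"]
      Q_coeffs F0_coeffs by (simp_all add: numeral_2_eq_2)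
  moreover have "coeff L 0 = of_nat n * coeff F1 1 + of_nat (n choose 2) * coeff K 1"
    using arg_cong[OF L_factor, of "\<lambda>f. coeff f 1"] by simp
  ultimately have at_1: "poly F0 1 = 0" "poly F1 1 = coeff F1 0 + of_nat n * coeff F0 1"
      "poly F2 1 = coeff F2 0 + of_nat n * coeff F1 1"
    using shift_evals[of 0] by (simp_all add: poly_0_coeff_0)
  obtain z0 z1 z2 where z: "in_Zp p z0" "in_Zp p z1" "in_Zp p z2"
    "poly F0 P = coeff F0 0 + coeff F0 1 * P + coeff F0 2 * P ^ 2 + P ^ 3 * z0"
    "poly F1 P = coeff F1 0 + coeff F1 1 * P + coeff F1 2 * P ^ 2 + P ^ 3 * z1"
    "poly F2 P = coeff F2 0 + coeff F2 1 * P + coeff F2 2 * P ^ 2 + P ^ 3 * z2"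
    using Zp_poly_cubic_remainder[OF Zp_polys(1)] Zp_poly_cubic_remainder[OF Zp_polys(2)]
      Zp_poly_cubic_remainder[OF Zp_polys(3)] unfolding P_def by (metis in_Zp_of_nat)
  define r where "r = inverse (of_nat n :: rat)"
  define Z where "Z = z0 + coeff F1 2 * r + z1 * P * r + coeff F2 1 * r ^ 2 + coeff F2 2 * P * r ^ 2
    + z2 * P ^ 2 * r ^ 2"
  have "in_Zp p r" unfolding r_def using in_Zp_inverse_of_nat n_bounds by simp
  then have "in_Zp p Z"
    unfolding Z_def P_def using z(1-3) Zp_polys(2,3) unfolding Zp_poly_def by (simp add: in_Zp_intros)
  moreover have "of_nat n \<noteq> (0 :: rat)" using n_bounds by simp
  then have "F P - F 1 = P ^ 3 * Z"
    unfolding F_def z(4-6) at_1 F0_coeffs Z_def r_def P_def[symmetric]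
    by (simp add: field_simps power2_eq_square power3_eq_cube)
  ultimately show ?thesis unfolding Zp_dvd_def P_def by blast
qed

lemma shift_Zp_dvd:
  assumes "in_Zp p s"
  shows "Zp_dvd p 3 (F (s + 1) * s ^ n - (F s + poly Q s) * (s + y) ^ n)"
proof -
  obtain m where m: "n = m + 3" using le_Suc_ex[OF n_bounds(1)] by (auto simp: add.commute)
  define N C where "N = (of_nat n :: rat)" and "C = (of_nat (n choose 2) :: rat)"
  define U where "U = (\<Sum>k=3..n. of_nat (n choose k) * y ^ (k - 3) * s ^ (n - k))"
  define k f1 f2 l where "k = poly K s" and "f1 = poly F1 s" and "f2 = poly F2 s" and "l = poly L s"
  define W where "W = C * s ^ (m + 1) * f1 + N * s ^ (m + 2) * f2 + y * C * s ^ (m + 1) * f2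
    + (s * k + y * f1 + y ^ 2 * f2) * U"
  have "in_Zp p y" using in_Zp_if_Zp_dvd[OF y_Zp_dvd] .
  then have "in_Zp p W"
    unfolding W_def N_def C_def U_def k_def f1_def f2_def using assms Zp_polys
    by (intro in_Zp_intros in_Zp_poly) simp_all
  have "(s + y) ^ n = s ^ (m + 3) + N * s ^ (m + 2) * y + C * s ^ (m + 1) * y ^ 2 + y ^ 3 * U"
    unfolding U_def N_def C_def using binomial_ring_order_3[OF n_bounds(1), of s y] m by simp
  moreover have "F (s + 1) = s * k + y * (f1 + N * k) + y ^ 2 * (f2 + l)"
    and "F s + poly Q s = s * k + y * f1 + y ^ 2 * f2"
    unfolding F_def k_def f1_def f2_def l_def N_def using shift_evals[of s] by simp_all
  moreover have "s * l - N * f1 - C * k = 0"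
    unfolding l_def N_def C_def f1_def k_def using shift_evals(5)[of s] by simp
  ultimately have "F (s + 1) * s ^ n - (F s + poly Q s) * (s + y) ^ n = - (y ^ 3 * W)"
    unfolding W_def m by (simp only: telescoping_identity)
  moreover have "Zp_dvd p 3 (y ^ 3)" using Zp_dvd_power[OF y_Zp_dvd, of 3] by simp
  ultimately show ?thesis using \<open>in_Zp p W\<close> by (simp add: Zp_dvd_uminus Zp_dvd_mult_right)
qed

lemma telescoping_step:
  assumes "1 \<le> t" "t < p"
  shows "Zp_dvd p 3 (poly Q (of_nat t) * poch_weight n y t
    - (F (of_nat (Suc t)) * poch_weight n y (Suc t) - F (of_nat t) * poch_weight n y t))"
proof -
  define s where "s = (of_nat t :: rat)"
  define w where "w = poch_weight n y t"
  have "Zp_unit p (of_int (int t) + y)"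
    using assms by (intro Zp_unit_add_Zp_dvd Zp_unit_of_int y_Zp_dvd) (auto dest: zdvd_imp_le)
  then have unit: "Zp_unit p (s + y)" unfolding s_def by simp
  then have "s + y \<noteq> 0" unfolding Zp_unit_def by simp
  then have "poly Q s * w - (F (s + 1) * (w * (s / (s + y)) ^ n) - F s * w)
      = - (w * inverse (s + y) ^ n * (F (s + 1) * s ^ n - (F s + poly Q s) * (s + y) ^ n))"
    by (simp add: field_simps power_divide)
  moreover have "in_Zp p (w * inverse (s + y) ^ n)"
    unfolding w_def using unit in_Zp_poch_weight[OF y_Zp_dvd, of t n] assms(2)
    unfolding Zp_unit_def by (simp add: in_Zp_mult in_Zp_power)
  ultimately show ?thesis
    using shift_Zp_dvd[of s] poch_weight_Suc[OF assms(1)] unfolding s_def w_def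
    by (simp add: Zp_dvd_uminus Zp_dvd_mult_left add.commute)
qed

lemma weighted_sum_Zp_dvd: "Zp_dvd p 3 (\<Sum>t=1..<p. poly Q (of_nat t) * poch_weight n y t)"
proof -
  define g where "g t = F (of_nat t) * poch_weight n y t" for t
  have "Zp_dvd p 3 (\<Sum>t=1..<p. poly Q (of_nat t) * poch_weight n y t - (g (Suc t) - g t))"
    using telescoping_step unfolding g_def by (intro Zp_dvd_sum) auto
  moreover have "(\<Sum>t=1..<p. g (Suc t) - g t) = g p - g 1"
    using sum_Suc_diff'[of 1 p g] n_bounds by simp
  ultimately have "Zp_dvd p 3 ((\<Sum>t=1..<p. poly Q (of_nat t) * poch_weight n y t) - (g p - g 1))"
    by (simp only: sum_subtractf)
  moreover have "Zp_dvd p 3 (g p - g 1)"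
  proof -
    have "poly F0 1 = 0" using shift_evals(2)[of 0] by simp
    moreover have "g 1 = F 1" unfolding g_def poch_weight_def by simp
    moreover have "of_nat n \<noteq> (0 :: rat)" using n_bounds by simp
    ultimately have split: "g p - g 1 = (F (of_nat p) - F 1) * poch_weight n y p
        + (y * (poly F1 1 + y * poly F2 1)) * (poch_weight n y p - 1)"
      unfolding g_def[of p] F_def by (simp add: field_simps power2_eq_square)
    have "Zp_dvd p 3 ((F (of_nat p) - F 1) * poch_weight n y p)"
      using F_endpoint_cong in_Zp_poch_weight[OF y_Zp_dvd] by (simp add: Zp_dvd_mult_right)
    moreover have "Zp_dvd p 1 (y * (poly F1 1 + y * poly F2 1))"
      using y_Zp_dvd in_Zp_if_Zp_dvd[OF y_Zp_dvd] Zp_polys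
      by (intro Zp_dvd_mult_right in_Zp_intros in_Zp_poly) simp_all
    from Zp_dvd_mult[OF this poch_weight_p_cong[OF y_Zp_dvd, where n = n]]
    have "Zp_dvd p 3 ((y * (poly F1 1 + y * poly F2 1)) * (poch_weight n y p - 1))"
      using n_bounds by (simp add: numeral_3_eq_3)
    ultimately show ?thesis unfolding split by (rule Zp_dvd_add)
  qed
  ultimately show ?thesis using Zp_dvd_add by fastforce
qed

end

context Zp
begin

text \<open>The constant term of \<open>F\<^sub>1\<close> is chosen so that \<open>n F\<^sub>1 + C(n,2) K\<close> vanishes at \<open>0\<close>.\<close>

lemma telescoping_corrections_exist:
  assumes K: "Zp_poly p K" "degree K \<le> d" and "d + 2 \<le> p" and n: "0 < n" "n < p"
  obtains F1 F2 L where "Zp_poly p F1" "Zp_poly p F2" "Zp_poly p L"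
    "pcompose F1 [:1, 1:] = F1 + smult (of_nat n) K"
    "pCons 0 L = smult (of_nat n) F1 + smult (of_nat (n choose 2)) K"
    "pcompose F2 [:1, 1:] = F2 + L"
proof -
  define c where "c = - of_nat (n choose 2) * inverse (of_nat n) * coeff K 0"
  have deg_nK: "degree (smult (of_nat n) K) \<le> d" using order.trans[OF degree_smult_le K(2)] .
  then have "degree (smult (of_nat n) K) + 2 \<le> p" using assms(3) by linarith
  then obtain F1' where F1': "Zp_poly p F1'" "degree F1' \<le> degree (smult (of_nat n) K) + 1"
      "coeff F1' 0 = 0" "pcompose F1' [:1, 1:] = F1' + smult (of_nat n) K"
    using Zp_poly_antidifference[OF Zp_poly_smult[OF in_Zp_of_nat K(1)]] by blast
  define F1 where "F1 = F1' + [:c:]"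
  have "in_Zp p c"
    unfolding c_def using K(1) in_Zp_inverse_of_nat[of n] n unfolding Zp_poly_def
    by (simp add: in_Zp_mult in_Zp_uminus)
  then have F1: "Zp_poly p F1" "degree F1 \<le> d + 1" "pcompose F1 [:1, 1:] = F1 + smult (of_nat n) K"
    unfolding F1_def using F1' deg_nK by (simp_all add: Zp_poly_add pcompose_add pcompose_pCons degree_add_le)
  have "coeff (smult (of_nat n) F1 + smult (of_nat (n choose 2)) K) 0 = 0"
    unfolding F1_def c_def using F1'(3) n by simp
  moreover have "degree (smult (of_nat n) F1 + smult (of_nat (n choose 2)) K) \<le> d + 1"
    using F1(2) K(2) by (intro degree_add_le order.trans[OF degree_smult_le]) auto
  ultimately obtain L where L: "Zp_poly p L" "degree L \<le> d"
      "pCons 0 L = smult (of_nat n) F1 + smult (of_nat (n choose 2)) K"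
    using Zp_poly_divide_X F1(1) K(1) by (metis Zp_poly_add Zp_poly_smult in_Zp_of_nat)
  obtain F2 where "Zp_poly p F2" "pcompose F2 [:1, 1:] = F2 + L"
    using Zp_poly_antidifference[OF L(1)] L(2) assms(3) by fastforce
  then show thesis using that F1(1,3) L by blast
qed

lemma telescoping_polys_exist:
  assumes n: "3 \<le> n" "n < p" and m: "1 \<le> m" "n * m + 2 \<le> p" and parity: "even n \<or> even m"
  shows "\<exists>F0 F1 F2 K L. telescoping_polys p n (pochhammer_poly m ^ n) F0 F1 F2 K L"
proof -
  define Q :: "rat poly" where "Q = pochhammer_poly m ^ n"
  have "\<And>i. i < 3 \<Longrightarrow> coeff Q i = 0"
    unfolding Q_def using m n by (simp add: coeff_pochhammer_poly_power_eq_0)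
  moreover have "Zp_poly p Q" unfolding Q_def by (simp add: Zp_poly_power Zp_poly_prod pochhammer_poly_def)
  ultimately have Q: "Zp_poly p Q" "degree Q \<le> n * m" "\<And>i. i < 3 \<Longrightarrow> coeff Q i = 0"
    unfolding Q_def by (simp_all add: degree_pochhammer_poly_power_le)
  obtain F0 where F0: "Zp_poly p F0" "degree F0 \<le> n * m + 1" "coeff F0 0 = 0"
      "pcompose F0 [:1, 1:] = F0 + Q"
    using Zp_poly_antidifference[OF Q(1)] Q(2) m(2) by fastforce
  have "coeff F0 2 = 0"
    using antidifference_pochhammer_power_coeff_2 F0(4) n(1) m(1) parity unfolding Q_def by blast
  have "degree (F0 + Q) \<le> n * m + 1" using F0(2) Q(2) by (intro degree_add_le) auto
  then obtain K where K: "Zp_poly p K" "degree K \<le> n * m" "F0 + Q = pCons 0 K"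
    using Zp_poly_divide_X[OF Zp_poly_add[OF F0(1) Q(1)]] F0(3) Q(3)[of 0] by auto
  have "0 < n" using n by simp
  obtain F1 F2 L where "Zp_poly p F1" "Zp_poly p F2" "Zp_poly p L"
    "pcompose F1 [:1, 1:] = F1 + smult (of_nat n) K"
    "pCons 0 L = smult (of_nat n) F1 + smult (of_nat (n choose 2)) K"
    "pcompose F2 [:1, 1:] = F2 + L"
    using telescoping_corrections_exist[OF K(1,2) m(2) \<open>0 < n\<close> n(2)] by blast
  then have "telescoping_polys p n Q F0 F1 F2 K L"
    using F0 K \<open>coeff F0 2 = 0\<close> Q(3) n by unfold_locales auto
  then show ?thesis unfolding Q_def by blast
qed

end

section \<open>The sum\<close>

lemma pochhammer_ratio_shift:
  fixes y :: rat
  assumes "2 \<le> q" "1 \<le> t" "0 < n" "y \<noteq> 0" "pochhammer (y - of_nat q + 2) (q - 2) \<noteq> 0"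
  shows "(of_nat n * y) ^ n * (pochhammer 1 (t + (q - 2)) ^ n / pochhammer (y - of_nat q + 2) (t + (q - 2)) ^ n)
    = (of_nat n / pochhammer (y - of_nat q + 2) (q - 2)) ^ n * (pochhammer (of_nat t) (q - 1) ^ n * poch_weight n y t)"
proof -
  define a where "a = y - of_nat q + 2"
  have "t + (q - 2) = (t - 1) + (q - 1)" using assms(1,2) by simp
  then have "pochhammer (1 :: rat) (t + (q - 2)) = pochhammer 1 (t - 1) * pochhammer (1 + of_nat (t - 1)) (q - 1)"
    by (simp only: pochhammer_product')
  also have "\<dots> = fact (t - 1) * pochhammer (of_nat t) (q - 1)"
    using assms(2) by (simp add: pochhammer_fact of_nat_diff)
  finally have num: "pochhammer (1 :: rat) (t + (q - 2)) = fact (t - 1) * pochhammer (of_nat t) (q - 1)" .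
  have "a + of_nat (q - 2) = y" unfolding a_def using assms(1) by (simp add: of_nat_diff)
  then have "pochhammer a (t + (q - 2)) = pochhammer a (q - 2) * pochhammer y t"
    by (metis add.commute pochhammer_product')
  also have "pochhammer y t = y * pochhammer (y + 1) (t - 1)"
    using assms(2) pochhammer_rec[of y "t - 1"] by simp
  finally have den: "pochhammer a (t + (q - 2)) = pochhammer a (q - 2) * (y * pochhammer (y + 1) (t - 1))" .
  show ?thesis
    using assms(3-5) unfolding a_def[symmetric] num den poch_weight_def
    by (simp add: field_simps power_mult_distrib power_divide)
qed

definition summand :: "nat \<Rightarrow> nat \<Rightarrow> nat \<Rightarrow> nat \<Rightarrow> rat" where
  "summand p n q k = of_nat p ^ n * (pochhammer 1 k ^ n / pochhammer (of_nat p / of_nat n - of_nat q + 2) k ^ n)"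

context Zp
begin

lemma Zp_dvd_pochhammer_of_nat:
  assumes "t \<le> p" "p < t + m"
  shows "Zp_dvd p 1 (pochhammer (of_nat t) m)"
proof -
  have "p - t \<in> {..<m}" using assms by auto
  then have "pochhammer (of_nat t) m = (of_nat t + of_nat (p - t)) * (\<Prod>j\<in>{..<m} - {p - t}. of_nat t + of_nat j)"
    unfolding pochhammer_prod atLeast0LessThan by (simp add: prod.remove)
  also have "of_nat t + of_nat (p - t) = (of_nat p :: rat)" using assms(1) by (simp flip: of_nat_add)
  finally have eq: "pochhammer (of_nat t :: rat) m = of_nat p * (\<Prod>j\<in>{..<m} - {p - t}. of_nat t + of_nat j)" .
  show ?thesis unfolding eq by (intro Zp_dvd_mult_right Zp_dvd_of_nat_p in_Zp_prod in_Zp_add in_Zp_of_nat)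
qed

lemma truncated_weighted_sum_Zp_dvd:
  assumes "3 \<le> n" "n < p" "1 \<le> m" "n * m + 2 \<le> p" "even n \<or> even m"
  shows "Zp_dvd p 3 (\<Sum>t=1..p-m. pochhammer (of_nat t) m ^ n * poch_weight n (of_nat p / of_nat n) t)"
proof -
  define y where "y = (of_nat p / of_nat n :: rat)"
  define f where "f t = pochhammer (of_nat t) m ^ n * poch_weight n y t" for t
  obtain F0 F1 F2 K L where "telescoping_polys p n (pochhammer_poly m ^ n) F0 F1 F2 K L"
    using telescoping_polys_exist assms by blast
  from telescoping_polys.weighted_sum_Zp_dvd[OF this]
  have full: "Zp_dvd p 3 (\<Sum>t=1..<p. f t)" by (simp add: f_def y_def poly_pochhammer_poly)
  have tail: "Zp_dvd p 3 (\<Sum>t=p-m+1..<p. f t)"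
  proof (rule Zp_dvd_sum)
    fix t assume t: "t \<in> {p - m + 1..<p}"
    have "Zp_dvd p (1 * n) (pochhammer (of_nat t) m ^ n)"
      using t Zp_dvd_pochhammer_of_nat[of t m] by (intro Zp_dvd_power) auto
    then have "Zp_dvd p 3 (pochhammer (of_nat t) m ^ n)" using assms(1) Zp_dvd_mono by simp
    moreover have "in_Zp p (poch_weight n y t)"
      using t assms(1,2) unfolding y_def by (intro in_Zp_poch_weight Zp_dvd_p_div_of_nat) auto
    ultimately show "Zp_dvd p 3 (f t)" unfolding f_def by (rule Zp_dvd_mult_right)
  qed
  have "m \<le> n * m" using assms(1) by simp
  then have "1 \<le> p - m + 1" "p - m + 1 \<le> p" using assms(3,4) by linarith+
  from sum.atLeastLessThan_concat[OF this, of f]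
  have "(\<Sum>t=1..<p. f t) - (\<Sum>t=p-m+1..<p. f t) = (\<Sum>t=1..p-m. f t)"
    by (simp add: atLeastLessThanSuc_atLeastAtMost)
  with Zp_dvd_diff[OF full tail] show ?thesis unfolding f_def y_def by simp
qed

lemma summand_Zp_dvd:
  assumes "3 \<le> n" "Zp_unit p (pochhammer a k)"
  shows "Zp_dvd p 3 (of_nat p ^ n * (pochhammer 1 k ^ n / pochhammer a k ^ n))"
proof -
  have "pochhammer 1 k ^ n / pochhammer a k ^ n = (fact k * inverse (pochhammer a k)) ^ n"
    by (simp add: pochhammer_fact power_mult_distrib divide_inverse power_inverse)
  moreover have "in_Zp p \<dots>" using assms(2) unfolding Zp_unit_def by (simp add: in_Zp_mult in_Zp_power)
  moreover have "Zp_dvd p 3 (of_nat p ^ n)"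
    using Zp_dvd_power[OF Zp_dvd_of_nat_p, of n] assms(1) Zp_dvd_mono by simp
  ultimately show ?thesis by (simp add: Zp_dvd_mult_right)
qed

lemma Zp_unit_pochhammer_shifted:
  assumes "Zp_dvd p 1 y" "k + 2 \<le> q" "q < p"
  shows "Zp_unit p (pochhammer (y - of_nat q + 2) k)"
proof -
  have "\<not> int p dvd (2 - int q + int j)" if "j < k" for j
  proof
    assume dvd: "int p dvd (2 - int q + int j)"
    have "2 - int q + int j \<noteq> 0" "\<bar>2 - int q + int j\<bar> < int p" using that assms(2,3) by auto
    with dvd_imp_le_int[OF this(1) dvd] show False by simp
  qed
  then show ?thesis using Zp_unit_pochhammer[OF assms(1), of k "2 - int q"] by (simp add: algebra_simps)
qed

lemma tail_sum_Zp_dvd: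
  assumes "3 \<le> n" "n < p" "2 \<le> q" "n * (q - 1) + 2 \<le> p" "even n \<or> odd q"
  shows "Zp_dvd p 3 (\<Sum>k=q-1..p-1. summand p n q k)"
proof -
  define y where "y = (of_nat p / of_nat n :: rat)"
  define V where "V = pochhammer (y - of_nat q + 2) (q - 2)"
  have y: "Zp_dvd p 1 y" "y \<noteq> 0" "of_nat p = of_nat n * y"
    unfolding y_def using Zp_dvd_p_div_of_nat assms(1,2) by auto
  have "q - 1 \<le> n * (q - 1)" using assms(1) by simp
  then have "q < p" using assms(3,4) by linarith
  then have "Zp_unit p V" unfolding V_def using Zp_unit_pochhammer_shifted[OF y(1)] assms(3) by simp
  then have factor: "in_Zp p ((of_nat n / V) ^ n)" unfolding Zp_unit_def by (simp add: divide_inverse in_Zp_intros)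
  have "{q - 1..p - 1} = {1 + (q - 2)..p - (q - 1) + (q - 2)}" using assms(3) \<open>q < p\<close> by auto
  then have "(\<Sum>k=q-1..p-1. of_nat p ^ n * (pochhammer 1 k ^ n / pochhammer (y - of_nat q + 2) k ^ n))
      = (\<Sum>t=1..p-(q-1). of_nat p ^ n * (pochhammer 1 (t + (q - 2)) ^ n / pochhammer (y - of_nat q + 2) (t + (q - 2)) ^ n))"
    by (simp only: sum.shift_bounds_cl_nat_ivl)
  also have "\<dots> = (of_nat n / V) ^ n * (\<Sum>t=1..p-(q-1). pochhammer (of_nat t) (q - 1) ^ n * poch_weight n y t)"
    using assms y(2) \<open>Zp_unit p V\<close> unfolding sum_distrib_left y(3) V_def Zp_unit_def
    by (intro sum.cong refl pochhammer_ratio_shift) auto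
  finally have sum_eq: "(\<Sum>k=q-1..p-1. of_nat p ^ n * (pochhammer 1 k ^ n / pochhammer (y - of_nat q + 2) k ^ n))
      = (of_nat n / V) ^ n * (\<Sum>t=1..p-(q-1). pochhammer (of_nat t) (q - 1) ^ n * poch_weight n y t)" .
  have "even n \<or> even (q - 1)" using assms(3,5) by auto
  then have "Zp_dvd p 3 (\<Sum>t=1..p-(q-1). pochhammer (of_nat t) (q - 1) ^ n * poch_weight n y t)"
    unfolding y_def using assms by (intro truncated_weighted_sum_Zp_dvd) auto
  then show ?thesis using sum_eq factor unfolding summand_def y_def by (simp add: Zp_dvd_mult_left)
qed

lemma summand_sum_Zp_dvd:
  assumes "3 \<le> n" "n < p" "2 \<le> q" "n * (q - 1) + 2 \<le> p" "even n \<or> odd q"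
  shows "Zp_dvd p 3 (\<Sum>k=0..p-1. summand p n q k)"
proof -
  have "q - 1 \<le> n * (q - 1)" using assms(1) by simp
  then have "q < p" using assms(3,4) by linarith
  then have "sum (summand p n q) {0..p-1} = sum (summand p n q) ({0..<q-1} \<union> {q-1..p-1})"
    by (intro arg_cong[where f = "sum _"]) auto
  also have "\<dots> = sum (summand p n q) {0..<q-1} + sum (summand p n q) {q-1..p-1}"
    by (rule sum.union_disjoint) auto
  also have "Zp_dvd p 3 \<dots>"
  proof (rule Zp_dvd_add)
    show "Zp_dvd p 3 (sum (summand p n q) {0..<q-1})"
      using Zp_unit_pochhammer_shifted[OF Zp_dvd_p_div_of_nat] \<open>q < p\<close> assms(1,2) unfolding summand_def
      by (intro Zp_dvd_sum summand_Zp_dvd) auto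
    show "Zp_dvd p 3 (sum (summand p n q) {q-1..p-1})"
      using tail_sum_Zp_dvd assms by blast
  qed
  finally show ?thesis .
qed

end

theorem theorem1p2:
  fixes n q p :: nat
  assumes "n > 2" and "q > 0" and "even n \<or> odd q"
    and "prime p" and "p > max n ((q - 1) * n + 1)"
  shows "rat_cong ((of_nat p) ^ n *
            (\<Sum>k = 0..p - 1. (pochhammer (1::rat) k) ^ n /
               (pochhammer (of_nat p / of_nat n - of_nat q + 2) k) ^ n)) 0 p 3"
proof -
  interpret Zp p using assms(4) by unfold_locales
  have n: "3 \<le> n" "n < p" and bound: "n * (q - 1) + 2 \<le> p" using assms by (auto simp: mult.commute)
  have "Zp_dvd p 3 (\<Sum>k=0..p-1. summand p n q k)"
  proof (cases "q = 1")
    case True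
    then show ?thesis
      using Zp_unit_pochhammer_plus_1[OF Zp_dvd_p_div_of_nat] n unfolding summand_def
      by (intro Zp_dvd_sum summand_Zp_dvd) (auto simp: algebra_simps)
  next
    case False
    then show ?thesis using summand_sum_Zp_dvd n bound assms(2,3) by simp
  qed
  then show ?thesis unfolding rat_cong_iff_Zp_dvd summand_def by (simp add: sum_distrib_left)
qed

end
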